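(* Let $p\ge2$, $m\in\mathbb{N}$, $a,b>0$, $\beta\in\mathbb{R}^p$, and consider $f(x)=(1,x^T)^T$ for $x\in\mathbb{R}^{p-1}$. Let $x_1,\ldots,x_p\in\mathbb{R}^{p-1}$ be such that $f(x_1),\ldots,f(x_p)$ are linearly independent, let $c\in\mathbb{R}$ with $f(x_j)^T\beta=c$ for $j=1,\ldots,p-1$ and $f(x_p)^T\beta>c$. Let $$w_p^*=\frac{2}{p+\sqrt{(p-2)^2+4(p-1)\dfrac{1+\frac{m}{b}\exp(f(x_p)^T\beta)}{1+\frac{m}{b}\exp(c)}}},\qquad w_1^*=\cdots=w_{p-1}^*=\frac{1-w_p^*}{p-1},$$ and let $\xi$ be the design assigning weight $w_j^*$ to $x_j$, $j=1,\ldots,p$. Then $$e_1^TM_{Po}(\xi;\beta)e_1\cdot w_p^*-w_1^*e^c+\frac{b}{m}(1-p\,w_1^* )=0.$$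
   Context: $e_1$ is the first standard unit vector of $\mathbb{R}^p$. For a design $\xi$ with support $x_1,\ldots,x_l$ and weights $w_1,\ldots,w_l$, the Poisson information matrix is $M_{Po}(\xi;\beta)=\sum_{j=1}^l w_j\exp(f(x_j)^T\beta)f(x_j)f(x_j)^T$. *)

theory Defs
  imports Complex_Main
begin

text \<open>Vectors of R^k are represented as functions nat => real; only coordinates 0..k-1 matter.
  Coordinate i (0-based) corresponds to coordinate i+1 of the paper.\<close>

definition fvec :: "nat \<Rightarrow> (nat \<Rightarrow> real) \<Rightarrow> (nat \<Rightarrow> real)" where
  "fvec p x = (\<lambda>i. if i = 0 then 1 else if i < p then x (i - 1) else 0)"

definition dotp :: "nat \<Rightarrow> (nat \<Rightarrow> real) \<Rightarrow> (nat \<Rightarrow> real) \<Rightarrow> real" where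
  "dotp p u v = (\<Sum>i<p. u i * v i)"

definition lin_indep_vecs :: "nat \<Rightarrow> nat \<Rightarrow> (nat \<Rightarrow> nat \<Rightarrow> real) \<Rightarrow> bool" where
  "lin_indep_vecs p k V =
     (\<forall>c. (\<forall>i<p. (\<Sum>j<k. c j * V j i) = 0) \<longrightarrow> (\<forall>j<k. c j = 0))"

definition M_Po :: "nat \<Rightarrow> nat \<Rightarrow> (nat \<Rightarrow> real) \<Rightarrow> (nat \<Rightarrow> nat \<Rightarrow> real) \<Rightarrow> (nat \<Rightarrow> real)
                    \<Rightarrow> nat \<Rightarrow> nat \<Rightarrow> real" where
  "M_Po p l w X \<beta> = (\<lambda>r s. \<Sum>j<l. w j * exp (dotp p (fvec p (X j)) \<beta>)
                                   * fvec p (X j) r * fvec p (X j) s)"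

definition e1 :: "nat \<Rightarrow> real" where
  "e1 = (\<lambda>i. if i = 0 then 1 else 0)"

definition qform :: "nat \<Rightarrow> (nat \<Rightarrow> nat \<Rightarrow> real) \<Rightarrow> (nat \<Rightarrow> real) \<Rightarrow> real" where
  "qform p A u = (\<Sum>r<p. \<Sum>s<p. u r * A r s * u s)"

end

theory Submission
  imports Defs
begin

text \<open>Only the first coordinate of each f(x_j) enters e_1^T M e_1, and it equals 1, so the
  left-hand side reduces to an identity between w_p^*, w_1^* = (1 - w_p^*)/(p - 1) and the two
  intensities exp c and exp(f(x_p)^T \<beta>). Clearing denominators, this identity says exactly
  that w_p^* is the positive root of the quadratic (p - 1)(r - 1) w^2 + p w - 1 = 0, where r is
  the ratio of the two terms 1 + (m/b) exp(...) appearing under the square root.\<close>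

lemma qform_e1:
  assumes "0 < p"
  shows "qform p A e1 = A 0 0"
proof -
  have "qform p A e1 = (\<Sum>r<p. if r = 0 then \<Sum>s<p. A 0 s * e1 s else 0)"
    unfolding qform_def by (intro sum.cong) (auto simp: e1_def)
  also have "\<dots> = (\<Sum>s<p. A 0 s * e1 s)"
    using assms by simp
  also have "\<dots> = (\<Sum>s<p. if s = 0 then A 0 0 else 0)"
    by (intro sum.cong) (auto simp: e1_def)
  also have "\<dots> = A 0 0"
    using assms by simp
  finally show ?thesis .
qed

lemma M_Po_0_0: "M_Po p l w X \<beta> 0 0 = (\<Sum>j<l. w j * exp (dotp p (fvec p (X j)) \<beta>))"
  by (simp add: M_Po_def fvec_def)

lemma weight_solves_quadratic:
  fixes n r :: real
  assumes "n \<ge> 1" and "r \<ge> 0"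
  defines "w \<equiv> 2 / (n + sqrt ((n - 2)\<^sup>2 + 4 * (n - 1) * r))"
  shows "(n - 1) * (r - 1) * w\<^sup>2 + n * w - 1 = 0"
proof -
  define S where "S = sqrt ((n - 2)\<^sup>2 + 4 * (n - 1) * r)"
  have discr_nonneg: "(n - 2)\<^sup>2 + 4 * (n - 1) * r \<ge> 0"
    using assms by simp
  have S_sq: "S\<^sup>2 = (n - 2)\<^sup>2 + 4 * (n - 1) * r"
    unfolding S_def using discr_nonneg by simp
  have "n + S > 0"
    using assms(1) real_sqrt_ge_zero[OF discr_nonneg] unfolding S_def by linarith
  then have "S * w = 2 - n * w"
    unfolding w_def S_def[symmetric] by (simp add: field_simps)
  then have "S\<^sup>2 * w\<^sup>2 = (2 - n * w)\<^sup>2"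
    by (metis power_mult_distrib)
  then show ?thesis
    unfolding S_sq by (simp add: power2_eq_square algebra_simps)
qed

lemma weight_equation_from_quadratic:
  fixes n k u v wp :: real
  assumes "n > 1" and "k + u \<noteq> 0"
    and "(n - 1) * ((k + v) / (k + u) - 1) * wp\<^sup>2 + n * wp - 1 = 0"
  defines "w1 \<equiv> (1 - wp) / (n - 1)"
  shows "((n - 1) * w1 * u + wp * v) * wp - w1 * u + k * (1 - n * w1) = 0"
proof -
  have "(n - 1) * (v - u) * wp\<^sup>2 + n * (k + u) * wp - (k + u) = 0"
    using assms(2,3) by (simp add: field_simps)
  moreover have "(n - 1) * (((n - 1) * w1 * u + wp * v) * wp - w1 * u + k * (1 - n * w1))
      = (n - 1) * (v - u) * wp\<^sup>2 + n * (k + u) * wp - (k + u)"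
  proof -
    have w1_scaled: "(n - 1) * w1 = 1 - wp"
      unfolding w1_def using assms(1) by simp
    have "(n - 1) * (((n - 1) * w1 * u + wp * v) * wp - w1 * u + k * (1 - n * w1))
        = (n - 1) * (((n - 1) * w1) * u + wp * v) * wp - ((n - 1) * w1) * u
          + k * ((n - 1) - n * ((n - 1) * w1))"
      by (simp add: algebra_simps)
    also have "\<dots> = (n - 1) * (v - u) * wp\<^sup>2 + n * (k + u) * wp - (k + u)"
      unfolding w1_scaled by (simp add: algebra_simps power2_eq_square)
    finally show ?thesis .
  qed
  ultimately show ?thesis
    using assms(1) by simp
qed

theorem lemma4:
  fixes p m :: nat and a b c :: real and \<beta> :: "nat \<Rightarrow> real"
    and X :: "nat \<Rightarrow> nat \<Rightarrow> real"
  assumes "p \<ge> 2" and "m > 0" and "a > 0" and "b > 0"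
    and "lin_indep_vecs p p (\<lambda>j. fvec p (X j))"
    and "\<forall>j < p - 1. dotp p (fvec p (X j)) \<beta> = c"
    and "dotp p (fvec p (X (p - 1))) \<beta> > c"
  shows "let wp = 2 / (real p + sqrt ((real p - 2)\<^sup>2 + 4 * (real p - 1) *
                  ((1 + real m / b * exp (dotp p (fvec p (X (p - 1))) \<beta>)) /
                   (1 + real m / b * exp c))));
             w1 = (1 - wp) / (real p - 1);
             w = (\<lambda>j. if j = p - 1 then wp else w1)
         in qform p (M_Po p p w X \<beta>) e1 * wp - w1 * exp c + b / real m * (1 - real p * w1) = 0"
proof -
  define d where "d = dotp p (fvec p (X (p - 1))) \<beta>"
  define k where "k = b / real m"
  define r where "r = (1 + real m / b * exp d) / (1 + real m / b * exp c)"
  define wp where "wp = 2 / (real p + sqrt ((real p - 2)\<^sup>2 + 4 * (real p - 1) * r))"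
  define w1 where "w1 = (1 - wp) / (real p - 1)"
  define w where "w = (\<lambda>j. if j = p - 1 then wp else w1)"
  have "k > 0"
    unfolding k_def using assms(2,4) by simp
  have "1 + real m / b * exp x = (k + exp x) / k" for x
    using assms(2,4) unfolding k_def by (simp add: field_simps)
  then have r_eq: "r = (k + exp d) / (k + exp c)"
    unfolding r_def using \<open>k > 0\<close> by simp
  have "r \<ge> 0"
    unfolding r_eq using \<open>k > 0\<close> by (simp add: add_pos_pos less_imp_le)
  have "M_Po p p w X \<beta> 0 0 = (\<Sum>j<Suc (p - 1). w j * exp (dotp p (fvec p (X j)) \<beta>))"
    using assms(1) by (simp add: M_Po_0_0)
  also have "\<dots> = (\<Sum>j<p - 1. w1 * exp c) + wp * exp d"
    using assms(6) by (simp add: w_def d_def)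
  finally have "qform p (M_Po p p w X \<beta>) e1 = (real p - 1) * w1 * exp c + wp * exp d"
    using assms(1) by (simp add: qform_e1 of_nat_diff)
  moreover have "((real p - 1) * w1 * exp c + wp * exp d) * wp - w1 * exp c
      + k * (1 - real p * w1) = 0"
  proof (unfold w1_def, rule weight_equation_from_quadratic)
    show "real p > 1" using assms(1) by simp
    show "k + exp c \<noteq> 0" using \<open>k > 0\<close> exp_gt_zero[of c] by linarith
    show "(real p - 1) * ((k + exp d) / (k + exp c) - 1) * wp\<^sup>2 + real p * wp - 1 = 0"
      using weight_solves_quadratic[of "real p" r] assms(1) \<open>r \<ge> 0\<close>
      unfolding wp_def r_eq by simp
  qed
  ultimately have "qform p (M_Po p p w X \<beta>) e1 * wp - w1 * exp c + k * (1 - real p * w1) = 0"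
    by simp
  then show ?thesis
    unfolding Let_def w_def w1_def wp_def r_def d_def k_def .
qed

end
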